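(* Let $G=H\rtimes\mathbb{Z}$ be a group with finite generating set $(X,\pi)$, where $H$ is the normal factor, and let $f\colon G\to\mathbb{Z}$ be the projection with kernel $H$. Let $\prec$ be a left-order on $G$ which is lexicographic led by $\mathbb{Z}$, i.e. whose positive cone is $f^{-1}(P_{\mathbb{Z}})\cup P_H$ for some positive cone $P_{\mathbb{Z}}$ of $\mathbb{Z}$ and some positive cone $P_H$ of $H$, and let $\mathcal{L}\subseteq X^*$ be a regular language with $\pi(\mathcal{L})$ equal to the positive cone of $\prec$. If $H$ is finitely generated, then $H$ is language-convex with respect to $\mathcal{L}$. In particular, the restriction of $\prec$ to $H$ is a regular left-order.
   Context: A finite generating set of $G$ is a finite set $X$ with a surjective monoid homomorphism $\pi\colon X^*\to G$; $\mathrm{dist}$ denotes the word metric on $G$ with respect to $X$. A positive cone of a group $K$ is a subsemigroup $P$ with $K=P\sqcup P^{-1}\sqcup\{1\}$. A subset $H\subseteq G$ is language-convex with respect to a language $\mathcal{L}\subseteq X^*$ if there is $R\ge0$ such that for every $w=x_1\cdots x_n\in\mathcal{L}$ with $\pi(w)\in H$, every prefix $w_i=x_1\cdots x_i$ satisfies $\mathrm{dist}(\pi(w_i),H)\le R$. A left-order on a finitely generated group $K$ is regular if there is a finite generating set $(Y,\pi_K)$ of $K$ and a regular language $\mathcal{M}\subseteq Y^*$ with $\pi_K(\mathcal{M})$ equal to its positive cone. *)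

theory Defs
  imports "HOL-Algebra.Algebra"
begin

definition word_eval :: "('a, 'b) monoid_scheme \<Rightarrow> ('x \<Rightarrow> 'a) \<Rightarrow> 'x list \<Rightarrow> 'a" where
  "word_eval GG lab w = foldr (\<lambda>x a. lab x \<otimes>\<^bsub>GG\<^esub> a) w \<one>\<^bsub>GG\<^esub>"

(* (A, pi) is a finite generating set of GG, with pi = word_eval GG lab *)
definition fin_gen_set :: "('a, 'b) monoid_scheme \<Rightarrow> 'x set \<Rightarrow> ('x \<Rightarrow> 'a) \<Rightarrow> bool" where
  "fin_gen_set GG A lab \<longleftrightarrow> finite A \<and> lab ` A \<subseteq> carrier GG
     \<and> word_eval GG lab ` lists A = carrier GG"

definition word_dist :: "('a, 'b) monoid_scheme \<Rightarrow> 'x set \<Rightarrow> ('x \<Rightarrow> 'a) \<Rightarrow> 'a \<Rightarrow> 'a \<Rightarrow> nat" where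
  "word_dist GG A lab g h = (LEAST n. \<exists>w \<in> lists (lab ` A \<union> m_inv GG ` lab ` A).
      length w = n \<and> foldr (\<otimes>\<^bsub>GG\<^esub>) w \<one>\<^bsub>GG\<^esub> = inv\<^bsub>GG\<^esub> g \<otimes>\<^bsub>GG\<^esub> h)"

definition regular_lang :: "'x set \<Rightarrow> 'x list set \<Rightarrow> bool" where
  "regular_lang A L \<longleftrightarrow> (\<exists>(Q :: nat set) q0 (\<delta> :: nat \<Rightarrow> 'x \<Rightarrow> nat) F.
      finite Q \<and> q0 \<in> Q \<and> (\<forall>q\<in>Q. \<forall>x\<in>A. \<delta> q x \<in> Q) \<and> F \<subseteq> Q \<and>
      L = {w \<in> lists A. foldl \<delta> q0 w \<in> F})"

definition positive_cone :: "('a, 'b) monoid_scheme \<Rightarrow> 'a set \<Rightarrow> bool" where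
  "positive_cone KK P \<longleftrightarrow> P \<subseteq> carrier KK
     \<and> (\<forall>a\<in>P. \<forall>b\<in>P. a \<otimes>\<^bsub>KK\<^esub> b \<in> P)
     \<and> carrier KK = P \<union> m_inv KK ` P \<union> {\<one>\<^bsub>KK\<^esub>}
     \<and> P \<inter> m_inv KK ` P = {} \<and> \<one>\<^bsub>KK\<^esub> \<notin> P \<and> \<one>\<^bsub>KK\<^esub> \<notin> m_inv KK ` P"

definition language_convex :: "('a, 'b) monoid_scheme \<Rightarrow> 'x set \<Rightarrow> ('x \<Rightarrow> 'a) \<Rightarrow> 'x list set \<Rightarrow> 'a set \<Rightarrow> bool" where
  "language_convex GG A lab L H \<longleftrightarrow> (\<exists>R::real. R \<ge> 0 \<and>
     (\<forall>w\<in>L. word_eval GG lab w \<in> H \<longrightarrow>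
        (\<forall>i \<le> length w. \<exists>h\<in>H. real (word_dist GG A lab (word_eval GG lab (take i w)) h) \<le> R)))"

definition regular_left_order :: "('a, 'b) monoid_scheme \<Rightarrow> 'a set \<Rightarrow> bool" where
  "regular_left_order KK P \<longleftrightarrow> (\<exists>(Y :: 'a set) (lab :: 'a \<Rightarrow> 'a) M.
     fin_gen_set KK Y lab \<and> regular_lang Y M \<and> word_eval KK lab ` M = P)"

end

(* Let u z and u' z' be words of L whose values lie in H, and suppose u and u' lead to the same
   state of an automaton for L. Then u z' and u' z are accepted as well. Since f maps the image
   of L into PZ \<union> {0}, and PZ \<inter> -PZ = {}, the equations f(u z) = f(u' z') = 0 force
   f(u) = f(u'). So f takes only finitely many values on the prefixes of such words, and each of
   these prefixes is moved into H by right multiplication with one of finitely many fixed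
   elements. This gives language convexity. Recording the corrections c, c' before and after each
   letter x in the letter c^-1 x c', which lies in H, turns an automaton for L into one for a
   language over a finite generating set of H whose image is P \<inter> H. *)

theory Submission
  imports Defs
begin

lemma (in group) mult_inv_cancel_left: "a \<in> carrier G \<Longrightarrow> z \<in> carrier G \<Longrightarrow> a \<otimes> (inv a \<otimes> z) = z"
  by (simp add: m_assoc[symmetric])

lemma (in group) inv_mult_cancel_left: "a \<in> carrier G \<Longrightarrow> z \<in> carrier G \<Longrightarrow> inv a \<otimes> (a \<otimes> z) = z"
  by (simp add: m_assoc[symmetric])

lemma (in group) inv_mult_mult_cancel:
  "\<lbrakk>a \<in> carrier G; x \<in> carrier G; c \<in> carrier G; c' \<in> carrier G\<rbrakk>
    \<Longrightarrow> inv (a \<otimes> c) \<otimes> (a \<otimes> x \<otimes> c') = inv c \<otimes> x \<otimes> c'"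
  by (simp add: inv_mult_group m_assoc inv_mult_cancel_left)

section \<open>Words\<close>

lemma word_eval_Nil [simp]: "word_eval G lab [] = \<one>\<^bsub>G\<^esub>"
  by (simp add: word_eval_def)

lemma word_eval_Cons [simp]: "word_eval G lab (x # w) = lab x \<otimes>\<^bsub>G\<^esub> word_eval G lab w"
  by (simp add: word_eval_def)

lemma word_eval_carrier_update [simp]: "word_eval (G\<lparr>carrier := H\<rparr>) lab w = word_eval G lab w"
  by (simp add: word_eval_def)

lemma word_eval_map: "word_eval G lab (map e w) = word_eval G (lab \<circ> e) w"
  by (induction w) auto

lemma word_eval_cong: "(\<And>x. x \<in> set w \<Longrightarrow> lab x = lab' x) \<Longrightarrow> word_eval G lab w = word_eval G lab' w"
  by (induction w) auto

lemma (in monoid) word_eval_closed: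
  "lab ` set w \<subseteq> carrier G \<Longrightarrow> word_eval G lab w \<in> carrier G"
  by (induction w) auto

lemma (in subgroup) word_eval_in_subgroup:
  "lab ` set w \<subseteq> H \<Longrightarrow> word_eval G lab w \<in> H"
  by (induction w) auto

lemma (in monoid) word_eval_append:
  assumes "lab ` set u \<subseteq> carrier G" "lab ` set v \<subseteq> carrier G"
  shows "word_eval G lab (u @ v) = word_eval G lab u \<otimes> word_eval G lab v"
  using assms by (induction u) (auto simp: m_assoc word_eval_closed)

lemma (in monoid) word_eval_snoc:
  assumes "lab ` set w \<subseteq> carrier G" "lab x \<in> carrier G"
  shows "word_eval G lab (w @ [x]) = word_eval G lab w \<otimes> lab x"
  using assms by (simp add: word_eval_append)

lemma (in group) generate_eq_word_eval:
  assumes "Y \<subseteq> carrier G"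
  shows "generate G Y = word_eval G (\<lambda>y. y) ` lists (Y \<union> m_inv G ` Y)"
proof
  have YY: "Y \<union> m_inv G ` Y \<subseteq> carrier G" using assms by auto
  show "generate G Y \<subseteq> word_eval G (\<lambda>y. y) ` lists (Y \<union> m_inv G ` Y)"
  proof
    fix h assume "h \<in> generate G Y"
    then show "h \<in> word_eval G (\<lambda>y. y) ` lists (Y \<union> m_inv G ` Y)"
    proof (induction rule: generate.induct)
      case one
      show ?case by (rule image_eqI[of _ _ "[]"]) auto
    next
      case (incl h)
      then show ?case using assms by (intro image_eqI[of _ _ "[h]"]) auto
    next
      case (inv h)
      then show ?case using assms by (intro image_eqI[of _ _ "[inv h]"]) auto
    next
      case (eng h1 h2)
      then obtain u v where "u \<in> lists (Y \<union> m_inv G ` Y)" "v \<in> lists (Y \<union> m_inv G ` Y)"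
        "h1 = word_eval G (\<lambda>y. y) u" "h2 = word_eval G (\<lambda>y. y) v" by blast
      moreover have "word_eval G (\<lambda>y. y) (u @ v) = word_eval G (\<lambda>y. y) u \<otimes> word_eval G (\<lambda>y. y) v"
        using calculation(1,2) YY by (intro word_eval_append) auto
      ultimately show ?case by (intro image_eqI[of _ _ "u @ v"]) auto
    qed
  qed
  show "word_eval G (\<lambda>y. y) ` lists (Y \<union> m_inv G ` Y) \<subseteq> generate G Y"
  proof
    fix h assume "h \<in> word_eval G (\<lambda>y. y) ` lists (Y \<union> m_inv G ` Y)"
    then obtain w where w: "w \<in> lists (Y \<union> m_inv G ` Y)" "h = word_eval G (\<lambda>y. y) w" by blast
    from w(1) have "word_eval G (\<lambda>y. y) w \<in> generate G Y"
      using assms by (induction w) (auto intro: generate.intros)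
    with w(2) show "h \<in> generate G Y" by simp
  qed
qed

section \<open>Regular languages\<close>

lemma foldl_in_states:
  assumes "\<And>q x. q \<in> Q \<Longrightarrow> x \<in> A \<Longrightarrow> \<delta> q x \<in> Q" "w \<in> lists A" "q \<in> Q"
  shows "foldl \<delta> q w \<in> Q"
  using assms(2,3) by (induction w arbitrary: q) (auto intro: assms(1))

lemma regular_langI:
  fixes Q :: "'s set" and \<delta> :: "'s \<Rightarrow> 'x \<Rightarrow> 's"
  assumes "finite Q" "q0 \<in> Q" "\<And>q x. q \<in> Q \<Longrightarrow> x \<in> A \<Longrightarrow> \<delta> q x \<in> Q" "F \<subseteq> Q"
    and "L = {w \<in> lists A. foldl \<delta> q0 w \<in> F}"
  shows "regular_lang A L"
proof -
  obtain code :: "'s \<Rightarrow> nat" where code: "inj_on code Q"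
    using finite_imp_inj_to_nat_seg[OF assms(1)] by metis
  define decode where "decode = inv_into Q code"
  define \<delta>' where "\<delta>' i x = code (\<delta> (decode i) x)" for i x
  have run: "foldl \<delta>' (code q) w = code (foldl \<delta> q w)" if "w \<in> lists A" "q \<in> Q" for w q
    using that by (induction w arbitrary: q) (auto simp: \<delta>'_def decode_def code(1) assms(3))
  have "L = {w \<in> lists A. foldl \<delta>' (code q0) w \<in> code ` F}"
    unfolding assms(5)
  proof (intro Collect_cong conj_cong refl)
    fix w assume w: "w \<in> lists A"
    have "foldl \<delta> q0 w \<in> Q" by (rule foldl_in_states[OF assms(3) w assms(2)])
    then show "(foldl \<delta> q0 w \<in> F) = (foldl \<delta>' (code q0) w \<in> code ` F)"
      using run[OF w assms(2)] code(1) assms(4) by (simp add: inj_on_image_mem_iff)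
  qed
  moreover have "\<delta>' i x \<in> code ` Q" if "i \<in> code ` Q" "x \<in> A" for i x
    using that assms(3) by (auto simp: \<delta>'_def decode_def code(1))
  ultimately show ?thesis
    unfolding regular_lang_def using assms(1,2,4)
    by (intro exI[of _ "code ` Q"] exI[of _ "code q0"] exI[of _ \<delta>'] exI[of _ "code ` F"]) auto
qed

lemma regular_lang_subset_lists: "regular_lang A L \<Longrightarrow> L \<subseteq> lists A"
  unfolding regular_lang_def by blast

lemma regular_lang_map_inj:
  assumes "regular_lang A L" "inj_on e A"
  shows "regular_lang (e ` A) (map e ` L)"
proof -
  obtain Q :: "nat set" and q0 \<delta> F where dfa: "finite Q" "q0 \<in> Q" "\<forall>q\<in>Q. \<forall>x\<in>A. \<delta> q x \<in> Q"
    "F \<subseteq> Q" "L = {w \<in> lists A. foldl \<delta> q0 w \<in> F}"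
    using assms(1) unfolding regular_lang_def by blast
  define \<delta>' where "\<delta>' q y = \<delta> q (inv_into A e y)" for q y
  have run: "foldl \<delta>' q (map e w) = foldl \<delta> q w" if "w \<in> lists A" for w q
    using that by (induction w arbitrary: q) (auto simp: \<delta>'_def assms(2))
  have "map e ` L = {v \<in> lists (e ` A). foldl \<delta>' q0 v \<in> F}"
  proof (intro equalityI subsetI)
    fix v assume "v \<in> {v \<in> lists (e ` A). foldl \<delta>' q0 v \<in> F}"
    then have "v = map e (map (inv_into A e) v)" "map (inv_into A e) v \<in> lists A"
      by (auto simp: map_idI f_inv_into_f inv_into_into)
    then show "v \<in> map e ` L"
      using \<open>v \<in> _\<close> run dfa(5) by (metis (mono_tags, lifting) image_eqI mem_Collect_eq)
  next
    fix v assume "v \<in> map e ` L"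
    then obtain w where "w \<in> lists A" "foldl \<delta> q0 w \<in> F" "v = map e w" using dfa(5) by blast
    then show "v \<in> {v \<in> lists (e ` A). foldl \<delta>' q0 v \<in> F}" using run by auto
  qed
  then show ?thesis
    unfolding regular_lang_def using dfa(1-4)
    by (intro exI[of _ Q] exI[of _ q0] exI[of _ \<delta>'] exI[of _ F]) (auto simp: \<delta>'_def inv_into_into)
qed

lemma regular_lang_prefix_values_finite:
  fixes \<phi> :: "'x list \<Rightarrow> 'b::ab_group_add"
  assumes "regular_lang A L"
    and additive: "\<And>u v. u \<in> lists A \<Longrightarrow> v \<in> lists A \<Longrightarrow> \<phi> (u @ v) = \<phi> u + \<phi> v"
    and value_in_S: "\<And>w. w \<in> L \<Longrightarrow> \<phi> w \<in> S"
    and pointed: "\<And>s. s \<in> S \<Longrightarrow> - s \<in> S \<Longrightarrow> s = 0"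
  shows "finite {\<phi> u | u z. u @ z \<in> L \<and> \<phi> (u @ z) = 0}"
proof -
  obtain Q :: "nat set" and q0 \<delta> F where dfa: "finite Q" "q0 \<in> Q" "\<forall>q\<in>Q. \<forall>x\<in>A. \<delta> q x \<in> Q"
    "F \<subseteq> Q" "L = {w \<in> lists A. foldl \<delta> q0 w \<in> F}"
    using assms(1) unfolding regular_lang_def by blast
  define Z where "Z = {(u, z). u @ z \<in> L \<and> \<phi> (u @ z) = 0}"
  have same_state_same_value: "\<phi> u = \<phi> u'"
    if "(u, z) \<in> Z" "(u', z') \<in> Z" "foldl \<delta> q0 u = foldl \<delta> q0 u'" for u z u' z'
  proof -
    have lists: "u \<in> lists A" "z \<in> lists A" "u' \<in> lists A" "z' \<in> lists A"
      using that(1,2) dfa(5) by (auto simp: Z_def)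
    have "u @ z' \<in> L" "u' @ z \<in> L"
      using that dfa(5) lists by (auto simp: Z_def)
    then have "\<phi> u + \<phi> z' \<in> S" "\<phi> u' + \<phi> z \<in> S"
      using value_in_S additive lists by metis+
    moreover have "\<phi> u + \<phi> z = 0" "\<phi> u' + \<phi> z' = 0"
      using that(1,2) additive lists by (auto simp: Z_def)
    ultimately have "\<phi> u - \<phi> u' \<in> S" "- (\<phi> u - \<phi> u') \<in> S"
      by (simp_all add: eq_neg_iff_add_eq_0[symmetric] algebra_simps)
    then show ?thesis using pointed by fastforce
  qed
  define value_at where "value_at q = \<phi> (fst (SOME p. p \<in> Z \<and> foldl \<delta> q0 (fst p) = q))" for q
  have "{\<phi> u | u z. u @ z \<in> L \<and> \<phi> (u @ z) = 0} \<subseteq> value_at ` Q"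
  proof clarify
    fix u z assume uz: "u @ z \<in> L" "\<phi> (u @ z) = 0"
    define q where "q = foldl \<delta> q0 u"
    have "u \<in> lists A" using uz(1) dfa(5) by auto
    then have q_in: "q \<in> Q" unfolding q_def using dfa(2,3) by (intro foldl_in_states) auto
    have uz_Z: "(u, z) \<in> Z" using uz by (simp add: Z_def)
    have "\<phi> u = value_at q"
      unfolding value_at_def
    proof (rule someI2[where Q = "\<lambda>p. \<phi> u = \<phi> (fst p)"])
      show "(u, z) \<in> Z \<and> foldl \<delta> q0 (fst (u, z)) = q" using uz_Z by (simp add: q_def)
    next
      fix p assume "p \<in> Z \<and> foldl \<delta> q0 (fst p) = q"
      then show "\<phi> u = \<phi> (fst p)"
        using same_state_same_value[of u z "fst p" "snd p"] uz_Z by (simp add: q_def)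
    qed
    with q_in show "\<phi> u \<in> value_at ` Q" by blast
  qed
  then show ?thesis using dfa(1) finite_subset by blast
qed

lemma fin_gen_set_map_inj:
  assumes "fin_gen_set K A lab" "inj_on e A"
  shows "fin_gen_set K (e ` A) (lab \<circ> inv_into A e)"
proof -
  have eval: "word_eval K (lab \<circ> inv_into A e) (map e w) = word_eval K lab w" if "w \<in> lists A" for w
    using that assms(2) by (auto simp: word_eval_map intro: word_eval_cong)
  have "word_eval K (lab \<circ> inv_into A e) ` lists (e ` A) = word_eval K lab ` lists A"
  proof (intro equalityI subsetI)
    fix g assume "g \<in> word_eval K (lab \<circ> inv_into A e) ` lists (e ` A)"
    then obtain v where v: "v \<in> lists (e ` A)" "g = word_eval K (lab \<circ> inv_into A e) v" by blast
    then have "v = map e (map (inv_into A e) v)" "map (inv_into A e) v \<in> lists A"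
      by (auto simp: map_idI f_inv_into_f inv_into_into)
    then show "g \<in> word_eval K lab ` lists A" using v eval by (metis image_eqI)
  next
    fix g assume "g \<in> word_eval K lab ` lists A"
    then obtain w where "w \<in> lists A" "g = word_eval K lab w" by blast
    then show "g \<in> word_eval K (lab \<circ> inv_into A e) ` lists (e ` A)"
      using eval by (intro image_eqI[of _ _ "map e w"]) auto
  qed
  then show ?thesis using assms(1) by (auto simp: fin_gen_set_def inv_into_into)
qed

(* regular_left_order takes the alphabet inside the element type of the group; a finite
   alphabet embeds there as soon as that type is infinite. *)
lemma regular_left_order_if_infinite:
  fixes K :: "('a, 'b) monoid_scheme" and A :: "'x set"
  assumes "infinite (UNIV :: 'a set)"
    and "fin_gen_set K A lab" "regular_lang A M" "word_eval K lab ` M = P"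
  shows "regular_left_order K P"
proof -
  have "finite A" using assms(2) by (simp add: fin_gen_set_def)
  obtain Y :: "'a set" where "finite Y" "card Y = card A"
    using infinite_arbitrarily_large[OF assms(1)] by blast
  then obtain e where e: "inj_on e A" "e ` A \<subseteq> Y"
    using card_le_inj[OF \<open>finite A\<close>] by (metis order_refl)
  have "word_eval K (lab \<circ> inv_into A e) ` map e ` M = P"
    using assms(4) regular_lang_subset_lists[OF assms(3)] e(1)
    by (auto simp: image_image word_eval_map intro!: image_cong word_eval_cong)
  then show ?thesis
    unfolding regular_left_order_def
    using fin_gen_set_map_inj[OF assms(2) e(1)] regular_lang_map_inj[OF assms(3) e(1)] by blast
qed

section \<open>Correcting prefixes into a subgroup\<close>

definition corrects_prefixes :: "('a, 'b) monoid_scheme \<Rightarrow> ('x \<Rightarrow> 'a) \<Rightarrow> 'x list set \<Rightarrow> 'a set \<Rightarrow> 'a set \<Rightarrow> bool" where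
  "corrects_prefixes G lab L H B \<longleftrightarrow> (\<forall>u z. u @ z \<in> L \<longrightarrow> word_eval G lab (u @ z) \<in> H \<longrightarrow>
     (\<exists>c\<in>B. word_eval G lab u \<otimes>\<^bsub>G\<^esub> c \<in> H))"

lemma (in group) word_dist_translate:
  "g \<in> carrier G \<Longrightarrow> x \<in> carrier G \<Longrightarrow> word_dist G A lab g (g \<otimes> x) = word_dist G A lab \<one> x"
  by (simp add: word_dist_def m_assoc[symmetric])

lemma (in group) language_convex_if_corrects_prefixes:
  assumes "lab ` A \<subseteq> carrier G" "L \<subseteq> lists A"
    and "finite B" "B \<subseteq> carrier G" "corrects_prefixes G lab L H B"
  shows "language_convex G A lab L H"
  unfolding language_convex_def
proof (intro exI[of _ "real (\<Sum>c\<in>B. word_dist G A lab \<one> c)"] conjI ballI impI allI)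
  fix w i assume w: "w \<in> L" "word_eval G lab w \<in> H" and "i \<le> length w"
  define g where "g = word_eval G lab (take i w)"
  have "set (take i w) \<subseteq> A" using w(1) assms(2) by (auto dest: in_set_takeD)
  then have "g \<in> carrier G" unfolding g_def using assms(1) by (intro word_eval_closed) auto
  obtain c where c: "c \<in> B" "g \<otimes> c \<in> H"
    using assms(5) w unfolding corrects_prefixes_def g_def by (metis append_take_drop_id)
  have "word_dist G A lab g (g \<otimes> c) = word_dist G A lab \<one> c"
    using \<open>g \<in> carrier G\<close> c(1) assms(4) by (intro word_dist_translate) auto
  also have "\<dots> \<le> (\<Sum>c\<in>B. word_dist G A lab \<one> c)"
    using assms(3) c(1) by (intro member_le_sum) auto
  finally show "\<exists>h\<in>H. real (word_dist G A lab g h) \<le> real (\<Sum>c\<in>B. word_dist G A lab \<one> c)"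
    using c(2) of_nat_mono by blast
qed (simp add: sum_nonneg)

lemma (in group_hom) finite_kernel_corrections:
  assumes "h ` carrier G = carrier H" "finite V"
  shows "\<exists>B. finite B \<and> B \<subseteq> carrier G \<and>
    (\<forall>g\<in>carrier G. h g \<in> V \<longrightarrow> (\<exists>c\<in>B. g \<otimes> c \<in> kernel G H h))"
proof -
  define t where "t v = (SOME c. c \<in> carrier G \<and> h c = inv\<^bsub>H\<^esub> v)" for v
  have t: "t v \<in> carrier G \<and> h (t v) = inv\<^bsub>H\<^esub> v" if "v \<in> carrier H" for v
  proof -
    have "inv\<^bsub>H\<^esub> v \<in> h ` carrier G" using assms(1) that by simp
    then have "\<exists>c. c \<in> carrier G \<and> h c = inv\<^bsub>H\<^esub> v" by (auto simp: image_iff)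
    then show ?thesis unfolding t_def by (rule someI_ex)
  qed
  show ?thesis
  proof (intro exI conjI ballI impI)
    show "finite (t ` (V \<inter> carrier H))" using assms(2) by simp
    show "t ` (V \<inter> carrier H) \<subseteq> carrier G" using t by blast
    fix g assume g: "g \<in> carrier G" "h g \<in> V"
    show "\<exists>c\<in>t ` (V \<inter> carrier H). g \<otimes> c \<in> kernel G H h"
    proof
      show "t (h g) \<in> t ` (V \<inter> carrier H)" using g by simp
      show "g \<otimes> t (h g) \<in> kernel G H h" using g t[of "h g"] by (simp add: kernel_def)
    qed
  qed
qed

lemma integer_group_inv_eq_uminus: "m_inv integer_group = uminus"
  by (rule ext) simp

lemma positive_cone_integer_group_pointed:
  assumes "positive_cone integer_group PZ" "n \<in> insert 0 PZ" "- n \<in> insert 0 PZ"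
  shows "n = 0"
  using assms unfolding positive_cone_def integer_group_inv_eq_uminus by force

lemma lexicographic_corrects_prefixes:
  assumes "group G" "lab ` A \<subseteq> carrier G" "f \<in> hom G integer_group" "f ` carrier G = UNIV"
    and "positive_cone integer_group PZ" "regular_lang A L"
    and "word_eval G lab ` L \<subseteq> {g \<in> carrier G. f g \<in> PZ} \<union> kernel G integer_group f"
  shows "\<exists>B. finite B \<and> B \<subseteq> carrier G \<and> corrects_prefixes G lab L (kernel G integer_group f) B"
proof -
  interpret group_hom G integer_group f
    using assms(1,3) by (simp add: group_hom_def group_hom_axioms_def)
  have closed: "word_eval G lab u \<in> carrier G" if "u \<in> lists A" for u
    using that assms(2) by (intro G.word_eval_closed) auto
  define V where "V = {f (word_eval G lab u) | u z. u @ z \<in> L \<and> f (word_eval G lab (u @ z)) = 0}"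
  have "finite V"
    unfolding V_def
  proof (rule regular_lang_prefix_values_finite[OF assms(6)])
    show "f (word_eval G lab (u @ v)) = f (word_eval G lab u) + f (word_eval G lab v)"
      if "u \<in> lists A" "v \<in> lists A" for u v
    proof -
      have "word_eval G lab (u @ v) = word_eval G lab u \<otimes>\<^bsub>G\<^esub> word_eval G lab v"
        using that assms(2) by (intro G.word_eval_append) auto
      then show ?thesis using that closed by simp
    qed
    show "f (word_eval G lab w) \<in> insert 0 PZ" if "w \<in> L" for w
      using that assms(7) by (auto simp: kernel_def)
  qed (rule positive_cone_integer_group_pointed[OF assms(5)])
  then obtain B where B: "finite B" "B \<subseteq> carrier G"
    and corrects: "\<And>g. g \<in> carrier G \<Longrightarrow> f g \<in> V \<Longrightarrow> \<exists>c\<in>B. g \<otimes>\<^bsub>G\<^esub> c \<in> kernel G integer_group f"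
    using finite_kernel_corrections assms(4) by force
  have "corrects_prefixes G lab L (kernel G integer_group f) B"
    unfolding corrects_prefixes_def
  proof (intro allI impI)
    fix u z assume uz: "u @ z \<in> L" "word_eval G lab (u @ z) \<in> kernel G integer_group f"
    then have "u \<in> lists A" using regular_lang_subset_lists[OF assms(6)] by auto
    then show "\<exists>c\<in>B. word_eval G lab u \<otimes>\<^bsub>G\<^esub> c \<in> kernel G integer_group f"
      using uz closed by (intro corrects) (auto simp: V_def kernel_def)
  qed
  with B show ?thesis by blast
qed

section \<open>The automaton of corrected words\<close>

(* The letter Inl (x, c, c') stands for c^-1 x c', where c and c' are the corrections before and
   after reading x; the state Some (q, c) pairs a state q of the automaton for L with the current
   correction c. The letters Inr y carry the generators of H: they are needed for generation only
   and are never accepted. *)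
fun corrected_step :: "('q \<Rightarrow> 'x \<Rightarrow> 'q) \<Rightarrow> ('q \<times> 'a) option \<Rightarrow> ('x \<times> 'a \<times> 'a) + 'a \<Rightarrow> ('q \<times> 'a) option" where
  "corrected_step \<delta> (Some (q, c)) (Inl (x, c1, c2)) = (if c = c1 then Some (\<delta> q x, c2) else None)"
| "corrected_step \<delta> _ _ = None"

fun corrected_label :: "('a, 'b) monoid_scheme \<Rightarrow> ('x \<Rightarrow> 'a) \<Rightarrow> ('x \<times> 'a \<times> 'a) + 'a \<Rightarrow> 'a" where
  "corrected_label G lab (Inl (x, c, c')) = inv\<^bsub>G\<^esub> c \<otimes>\<^bsub>G\<^esub> lab x \<otimes>\<^bsub>G\<^esub> c'"
| "corrected_label G lab (Inr y) = y"

definition corrected_word :: "'x list \<Rightarrow> (nat \<Rightarrow> 'a) \<Rightarrow> (('x \<times> 'a \<times> 'a) + 'a) list" where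
  "corrected_word w c = map (\<lambda>k. Inl (w ! k, c k, c (Suc k))) [0..<length w]"

lemma corrected_word_Nil [simp]: "corrected_word [] c = []"
  by (simp add: corrected_word_def)

lemma corrected_word_Cons [simp]:
  "corrected_word (x # w) c = Inl (x, c 0, c 1) # corrected_word w (\<lambda>k. c (Suc k))"
  by (simp add: corrected_word_def upt_conv_Cons map_Suc_upt[symmetric] del: upt_Suc)

lemma foldl_corrected_step_None [simp]: "foldl (corrected_step \<delta>) None ws = None"
  by (induction ws) auto

lemma foldl_corrected_step_corrected_word:
  "foldl (corrected_step \<delta>) (Some (q, c 0)) (corrected_word w c) = Some (foldl \<delta> q w, c (length w))"
  by (induction w arbitrary: q c) auto

lemma (in group) word_eval_corrected_word:
  assumes "lab ` set w \<subseteq> carrier G" "\<And>k. k \<le> length w \<Longrightarrow> c k \<in> carrier G"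
  shows "word_eval G (corrected_label G lab) (corrected_word w c) = inv (c 0) \<otimes> word_eval G lab w \<otimes> c (length w)"
  using assms
proof (induction w arbitrary: c)
  case (Cons x w)
  have IH: "word_eval G (corrected_label G lab) (corrected_word w (\<lambda>k. c (Suc k)))
      = inv (c 1) \<otimes> word_eval G lab w \<otimes> c (Suc (length w))"
    using Cons by force
  have "word_eval G lab w \<in> carrier G" using Cons.prems(1) by (intro word_eval_closed) auto
  moreover have "c 0 \<in> carrier G" "c 1 \<in> carrier G" "c (Suc (length w)) \<in> carrier G"
    using Cons.prems(2) by auto
  ultimately show ?case using Cons.prems(1) by (simp add: IH m_assoc mult_inv_cancel_left)
qed simp

lemma (in group) foldl_corrected_step_SomeD:
  assumes "foldl (corrected_step \<delta>) (Some (q, c)) ws = Some (q', c')"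
    and "ws \<in> lists (Inl ` (A \<times> C \<times> C) \<union> Inr ` UNIV)"
    and "lab ` A \<subseteq> carrier G" "C \<subseteq> carrier G" "c \<in> C"
  shows "\<exists>xs\<in>lists A. foldl \<delta> q xs = q' \<and> c' \<in> C \<and>
    word_eval G (corrected_label G lab) ws = inv c \<otimes> word_eval G lab xs \<otimes> c'"
  using assms(1,2,5)
proof (induction ws arbitrary: q c)
  case Nil
  then show ?case using assms(4) by (intro bexI[of _ "[]"]) auto
next
  case (Cons l ws)
  then obtain x c1 c2 where l: "l = Inl (x, c1, c2)" "x \<in> A" "c1 \<in> C" "c2 \<in> C"
    by (cases l) auto
  with Cons.prems(1) have "c = c1" "foldl (corrected_step \<delta>) (Some (\<delta> q x, c2)) ws = Some (q', c')"
    by (auto split: if_splits)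
  with Cons.IH obtain xs where xs: "xs \<in> lists A" "foldl \<delta> (\<delta> q x) xs = q'" "c' \<in> C"
      "word_eval G (corrected_label G lab) ws = inv c2 \<otimes> word_eval G lab xs \<otimes> c'"
    using Cons.prems(2) l(4) by auto
  have "word_eval G lab xs \<in> carrier G" using xs(1) assms(3) by (intro word_eval_closed) auto
  then have "word_eval G (corrected_label G lab) (l # ws) = inv c \<otimes> word_eval G lab (x # xs) \<otimes> c'"
    using l xs(3,4) \<open>c = c1\<close> assms(3,4) Cons.prems(3)
    by (simp add: m_assoc mult_inv_cancel_left subset_iff)
  with xs l(2) show ?case by (intro bexI[of _ "x # xs"]) auto
qed

definition correction_letters :: "('a, 'b) monoid_scheme \<Rightarrow> ('x \<Rightarrow> 'a) \<Rightarrow> 'x set \<Rightarrow> 'a set \<Rightarrow> 'a set \<Rightarrow> ('x \<times> 'a \<times> 'a) set" where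
  "correction_letters G lab A B H =
     {(x, c, c'). x \<in> A \<and> c \<in> B \<and> c' \<in> B \<and> inv\<^bsub>G\<^esub> c \<otimes>\<^bsub>G\<^esub> lab x \<otimes>\<^bsub>G\<^esub> c' \<in> H}"

definition corrected_language :: "('a, 'b) monoid_scheme \<Rightarrow> ('q \<Rightarrow> 'x \<Rightarrow> 'q) \<Rightarrow> 'q \<Rightarrow> 'q set \<Rightarrow>
    (('x \<times> 'a \<times> 'a) + 'a) set \<Rightarrow> (('x \<times> 'a \<times> 'a) + 'a) list set" where
  "corrected_language G \<delta> q0 F \<Sigma> =
     {ws \<in> lists \<Sigma>. foldl (corrected_step \<delta>) (Some (q0, \<one>\<^bsub>G\<^esub>)) ws \<in> Some ` (F \<times> {\<one>\<^bsub>G\<^esub>})}"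

lemma regular_lang_corrected_language:
  assumes "finite Q" "q0 \<in> Q" "\<And>q x. q \<in> Q \<Longrightarrow> x \<in> A \<Longrightarrow> \<delta> q x \<in> Q" "F \<subseteq> Q"
    and "finite B" "\<one>\<^bsub>G\<^esub> \<in> B" "\<Sigma> \<subseteq> Inl ` (A \<times> B \<times> B) \<union> Inr ` UNIV"
  shows "regular_lang \<Sigma> (corrected_language G \<delta> q0 F \<Sigma>)"
proof (rule regular_langI[where Q = "insert None (Some ` (Q \<times> B))"])
  show "corrected_step \<delta> s l \<in> insert None (Some ` (Q \<times> B))"
    if "s \<in> insert None (Some ` (Q \<times> B))" "l \<in> \<Sigma>" for s l
    using that assms(3,7) by (cases "(\<delta>, s, l)" rule: corrected_step.cases) auto
qed (use assms in \<open>auto simp: corrected_language_def\<close>)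

lemma (in group) corrected_language_eval_subset:
  assumes "subgroup H G" "lab ` A \<subseteq> carrier G" "B \<subseteq> carrier G" "\<one> \<in> B"
    and "\<Sigma> \<subseteq> Inl ` (A \<times> B \<times> B) \<union> Inr ` UNIV" "corrected_label G lab ` \<Sigma> \<subseteq> H"
  shows "word_eval G (corrected_label G lab) ` corrected_language G \<delta> q0 F \<Sigma>
    \<subseteq> word_eval G lab ` {w \<in> lists A. foldl \<delta> q0 w \<in> F} \<inter> H"
proof clarify
  fix ws assume "ws \<in> corrected_language G \<delta> q0 F \<Sigma>"
  then obtain qf where ws: "ws \<in> lists \<Sigma>" "qf \<in> F"
    "foldl (corrected_step \<delta>) (Some (q0, \<one>)) ws = Some (qf, \<one>)"
    by (auto simp: corrected_language_def)
  moreover have "ws \<in> lists (Inl ` (A \<times> B \<times> B) \<union> Inr ` UNIV)" using ws(1) assms(5) by auto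
  ultimately obtain xs where xs: "xs \<in> lists A" "foldl \<delta> q0 xs = qf"
    "word_eval G (corrected_label G lab) ws = inv \<one> \<otimes> word_eval G lab xs \<otimes> \<one>"
    using foldl_corrected_step_SomeD[OF ws(3) _ assms(2,3,4)] by blast
  have "word_eval G lab xs \<in> carrier G" using xs(1) assms(2) by (intro word_eval_closed) auto
  then have "word_eval G (corrected_label G lab) ws \<in> word_eval G lab ` {w \<in> lists A. foldl \<delta> q0 w \<in> F}"
    using xs ws(2) by simp
  moreover have "word_eval G (corrected_label G lab) ws \<in> H"
    using ws(1) assms(6) by (intro subgroup.word_eval_in_subgroup[OF assms(1)]) auto
  ultimately show "word_eval G (corrected_label G lab) ws
      \<in> word_eval G lab ` {w \<in> lists A. foldl \<delta> q0 w \<in> F} \<inter> H" by blast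
qed

lemma (in group) corrections_along_word:
  assumes "subgroup H G" "corrects_prefixes G lab L H B" "\<one> \<in> B"
    and "w \<in> L" "word_eval G lab w \<in> H"
  shows "\<exists>c. c 0 = \<one> \<and> c (length w) = \<one> \<and>
    (\<forall>k\<le>length w. c k \<in> B \<and> word_eval G lab (take k w) \<otimes> c k \<in> H)"
proof -
  have "\<exists>c\<in>B. word_eval G lab (take k w) \<otimes> c \<in> H" for k
    using assms(2,4,5) unfolding corrects_prefixes_def by (metis append_take_drop_id)
  then obtain c where c: "c k \<in> B" "word_eval G lab (take k w) \<otimes> c k \<in> H" for k
    by metis
  define c' where "c' k = (if k = 0 \<or> k = length w then \<one> else c k)" for k
  have "word_eval G lab w \<in> carrier G" using assms(5) subgroup.subset[OF assms(1)] by blast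
  then have "word_eval G lab (take k w) \<otimes> \<one> \<in> H" if "k = 0 \<or> k = length w" for k
    using that assms(5) subgroup.one_closed[OF assms(1)] by auto
  then show ?thesis using c assms(3) by (intro exI[of _ c']) (auto simp: c'_def)
qed

lemma (in group) corrected_word_letters:
  assumes "subgroup H G" "lab ` A \<subseteq> carrier G" "B \<subseteq> carrier G" "w \<in> lists A"
    and "\<And>k. k \<le> length w \<Longrightarrow> c k \<in> B \<and> word_eval G lab (take k w) \<otimes> c k \<in> H"
  shows "set (corrected_word w c) \<subseteq> Inl ` correction_letters G lab A B H"
proof
  fix l assume "l \<in> set (corrected_word w c)"
  then obtain k where k: "k < length w" "l = Inl (w ! k, c k, c (Suc k))"
    by (auto simp: corrected_word_def)
  define g where "g = word_eval G lab (take k w)"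
  have x: "w ! k \<in> A" "lab (w ! k) \<in> carrier G" using k(1) assms(2,4) by auto
  have prefix: "lab ` set (take k w) \<subseteq> carrier G" using assms(2,4) by (auto dest: in_set_takeD)
  have g: "g \<in> carrier G" "word_eval G lab (take (Suc k) w) = g \<otimes> lab (w ! k)"
    using k(1) x(2) prefix by (simp_all add: g_def take_Suc_conv_app_nth word_eval_snoc word_eval_closed)
  have c: "c k \<in> B" "c (Suc k) \<in> B" "g \<otimes> c k \<in> H" "g \<otimes> lab (w ! k) \<otimes> c (Suc k) \<in> H"
    using assms(5)[of k] assms(5)[of "Suc k"] k(1) g(2) by (auto simp: g_def)
  then have "inv (g \<otimes> c k) \<otimes> (g \<otimes> lab (w ! k) \<otimes> c (Suc k)) \<in> H"
    using assms(1) by (simp add: subgroup.m_closed subgroup.m_inv_closed)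
  moreover have "c k \<in> carrier G" "c (Suc k) \<in> carrier G" using c(1,2) assms(3) by auto
  ultimately have "inv (c k) \<otimes> lab (w ! k) \<otimes> c (Suc k) \<in> H"
    using inv_mult_mult_cancel[OF g(1) x(2)] by simp
  with c(1,2) x(1) k(2) show "l \<in> Inl ` correction_letters G lab A B H"
    by (auto simp: correction_letters_def)
qed

lemma (in group) corrected_language_eval_supset:
  assumes "subgroup H G" "lab ` A \<subseteq> carrier G" "B \<subseteq> carrier G" "\<one> \<in> B"
    and "corrects_prefixes G lab L H B" "L = {w \<in> lists A. foldl \<delta> q0 w \<in> F}"
    and "Inl ` correction_letters G lab A B H \<subseteq> \<Sigma>"
  shows "word_eval G lab ` L \<inter> H \<subseteq> word_eval G (corrected_label G lab) ` corrected_language G \<delta> q0 F \<Sigma>"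
proof clarify
  fix w assume w: "w \<in> L" "word_eval G lab w \<in> H"
  then have wA: "w \<in> lists A" and run: "foldl \<delta> q0 w \<in> F" using assms(6) by auto
  obtain c where c: "c 0 = \<one>" "c (length w) = \<one>"
    "\<And>k. k \<le> length w \<Longrightarrow> c k \<in> B \<and> word_eval G lab (take k w) \<otimes> c k \<in> H"
    using corrections_along_word[OF assms(1,5,4) w] by blast
  have "set (corrected_word w c) \<subseteq> \<Sigma>"
    using corrected_word_letters[OF assms(1,2,3) wA c(3)] assms(7) by blast
  moreover have "foldl (corrected_step \<delta>) (Some (q0, \<one>)) (corrected_word w c) = Some (foldl \<delta> q0 w, \<one>)"
    using foldl_corrected_step_corrected_word[of \<delta> q0 c w] c(1,2) by simp
  ultimately have "corrected_word w c \<in> corrected_language G \<delta> q0 F \<Sigma>"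
    using run by (auto simp: corrected_language_def)
  moreover have "word_eval G (corrected_label G lab) (corrected_word w c) = word_eval G lab w"
  proof -
    have "lab ` set w \<subseteq> carrier G" using wA assms(2) by auto
    then show ?thesis using assms(3) c by (subst word_eval_corrected_word) (auto simp: word_eval_closed)
  qed
  ultimately show "word_eval G lab w \<in> word_eval G (corrected_label G lab) ` corrected_language G \<delta> q0 F \<Sigma>"
    by (metis image_eqI)
qed

lemma (in group) fin_gen_set_corrected_alphabet:
  assumes "subgroup H G" "finite A" "finite B" "finite Y" "Y \<subseteq> H" "generate G Y = H"
  shows "fin_gen_set (G\<lparr>carrier := H\<rparr>)
    (Inl ` correction_letters G lab A B H \<union> Inr ` (Y \<union> m_inv G ` Y)) (corrected_label G lab)"
  unfolding fin_gen_set_def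
proof (intro conjI)
  have "correction_letters G lab A B H \<subseteq> A \<times> B \<times> B" by (auto simp: correction_letters_def)
  then have "finite (correction_letters G lab A B H)" using assms(2,3) by (simp add: finite_subset)
  then show "finite (Inl ` correction_letters G lab A B H \<union> Inr ` (Y \<union> m_inv G ` Y))"
    using assms(4) by simp
  have "Y \<union> m_inv G ` Y \<subseteq> H" using assms(1,5) subgroup.m_inv_closed by fastforce
  then show labels: "corrected_label G lab ` (Inl ` correction_letters G lab A B H \<union> Inr ` (Y \<union> m_inv G ` Y))
      \<subseteq> carrier (G\<lparr>carrier := H\<rparr>)"
    by (auto simp: correction_letters_def)
  have "H \<subseteq> word_eval G (corrected_label G lab) `
      lists (Inl ` correction_letters G lab A B H \<union> Inr ` (Y \<union> m_inv G ` Y))"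
  proof
    fix h assume "h \<in> H"
    then obtain ys where "ys \<in> lists (Y \<union> m_inv G ` Y)" "h = word_eval G (\<lambda>y. y) ys"
      using generate_eq_word_eval[of Y] assms(1,5,6) subgroup.subset by blast
    then show "h \<in> word_eval G (corrected_label G lab) `
        lists (Inl ` correction_letters G lab A B H \<union> Inr ` (Y \<union> m_inv G ` Y))"
      by (intro image_eqI[of _ _ "map Inr ys"]) (auto simp: word_eval_map comp_def)
  qed
  moreover have "word_eval G (corrected_label G lab) ws \<in> H"
    if "ws \<in> lists (Inl ` correction_letters G lab A B H \<union> Inr ` (Y \<union> m_inv G ` Y))" for ws
    using that labels by (intro subgroup.word_eval_in_subgroup[OF assms(1)]) auto
  ultimately show "word_eval (G\<lparr>carrier := H\<rparr>) (corrected_label G lab) `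
      lists (Inl ` correction_letters G lab A B H \<union> Inr ` (Y \<union> m_inv G ` Y)) = carrier (G\<lparr>carrier := H\<rparr>)"
    by auto
qed

lemma (in group) regular_left_order_if_corrects_prefixes:
  fixes lab :: "'x \<Rightarrow> 'a"
  assumes "infinite (UNIV :: 'a set)" "subgroup H G" "finite A" "lab ` A \<subseteq> carrier G"
    and "regular_lang A L" "finite B" "B \<subseteq> carrier G" "corrects_prefixes G lab L H B"
    and "finite Y" "Y \<subseteq> H" "generate G Y = H"
  shows "regular_left_order (G\<lparr>carrier := H\<rparr>) (word_eval G lab ` L \<inter> H)"
proof -
  define B' where "B' = insert \<one> B"
  have B': "finite B'" "B' \<subseteq> carrier G" "\<one> \<in> B'" "corrects_prefixes G lab L H B'"
    using assms(6,7,8) by (auto simp: B'_def corrects_prefixes_def)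
  obtain Q :: "nat set" and q0 \<delta> F where dfa: "finite Q" "q0 \<in> Q" "\<forall>q\<in>Q. \<forall>x\<in>A. \<delta> q x \<in> Q"
    "F \<subseteq> Q" "L = {w \<in> lists A. foldl \<delta> q0 w \<in> F}"
    using assms(5) unfolding regular_lang_def by blast
  define \<Sigma> where "\<Sigma> = Inl ` correction_letters G lab A B' H \<union> Inr ` (Y \<union> m_inv G ` Y)"
  have gen: "fin_gen_set (G\<lparr>carrier := H\<rparr>) \<Sigma> (corrected_label G lab)"
    unfolding \<Sigma>_def using fin_gen_set_corrected_alphabet assms(2,3,9,10,11) B'(1) by blast
  have \<Sigma>: "\<Sigma> \<subseteq> Inl ` (A \<times> B' \<times> B') \<union> Inr ` UNIV" "corrected_label G lab ` \<Sigma> \<subseteq> H"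
    using gen by (auto simp: \<Sigma>_def correction_letters_def fin_gen_set_def)
  have "regular_lang \<Sigma> (corrected_language G \<delta> q0 F \<Sigma>)"
    using regular_lang_corrected_language[OF dfa(1,2) _ dfa(4) B'(1,3) \<Sigma>(1)] dfa(3) by blast
  moreover have "word_eval (G\<lparr>carrier := H\<rparr>) (corrected_label G lab) ` corrected_language G \<delta> q0 F \<Sigma>
      = word_eval G lab ` L \<inter> H"
    using corrected_language_eval_subset[OF assms(2,4) B'(2,3) \<Sigma>, of \<delta> q0 F]
      corrected_language_eval_supset[OF assms(2,4) B'(2,3,4) dfa(5), of \<Sigma>]
    by (auto simp: \<Sigma>_def dfa(5)[symmetric])
  ultimately show ?thesis using regular_left_order_if_infinite[OF assms(1) gen] by blast
qed

theorem proposition4p3: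
  fixes G :: "('a, 'b) monoid_scheme"
    and A :: "'x set" and lab :: "'x \<Rightarrow> 'a"
    and H :: "'a set" and f :: "'a \<Rightarrow> int"
    and P PH :: "'a set" and PZ :: "int set" and L :: "'x list set"
  assumes "group G"
    and "fin_gen_set G A lab"
    and "f \<in> hom G integer_group" and "f ` carrier G = UNIV"
    and "kernel G integer_group f = H"
    and "positive_cone G P"
    and "positive_cone integer_group PZ"
    and "positive_cone (G\<lparr>carrier := H\<rparr>) PH"
    and "P = {g \<in> carrier G. f g \<in> PZ} \<union> PH"
    and "regular_lang A L"
    and "word_eval G lab ` L = P"
    and "\<exists>Y. finite Y \<and> Y \<subseteq> H \<and> generate G Y = H"
  shows "language_convex G A lab L H \<and> regular_left_order (G\<lparr>carrier := H\<rparr>) (P \<inter> H)"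
proof -
  interpret group G by (rule assms(1))
  have A: "finite A" "lab ` A \<subseteq> carrier G" using assms(2) by (auto simp: fin_gen_set_def)
  have "PH \<subseteq> H" using assms(8) by (simp add: positive_cone_def)
  then have "word_eval G lab ` L \<subseteq> {g \<in> carrier G. f g \<in> PZ} \<union> kernel G integer_group f"
    using assms(5,9,11) by blast
  then obtain B where B: "finite B" "B \<subseteq> carrier G" "corrects_prefixes G lab L H B"
    using lexicographic_corrects_prefixes[OF assms(1) A(2) assms(3,4,7,10)] assms(5) by blast
  have "group_hom G integer_group f"
    using assms(1,3) by (simp add: group_hom_def group_hom_axioms_def)
  then have "subgroup H G" using group_hom.subgroup_kernel assms(5) by blast
  moreover have "infinite (UNIV :: 'a set)"
    using assms(4) by (metis finite_imageI infinite_UNIV_int rev_finite_subset top_greatest)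
  moreover obtain Y where "finite Y" "Y \<subseteq> H" "generate G Y = H" using assms(12) by blast
  ultimately have "regular_left_order (G\<lparr>carrier := H\<rparr>) (word_eval G lab ` L \<inter> H)"
    using regular_left_order_if_corrects_prefixes A assms(10) B by blast
  moreover have "language_convex G A lab L H"
    using language_convex_if_corrects_prefixes A(2) regular_lang_subset_lists[OF assms(10)] B by blast
  ultimately show ?thesis using assms(11) by simp
qed

end
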